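(* $$\zeta(3)=\frac{4\pi^2}{21}\log\left(\frac{e^{\frac{4G}{\pi}}\,\mathcal C_3\left(\frac14\right)^{16}}{\sqrt2}\right).$$
   Context: $\zeta$ is the Riemann zeta function and $G=\sum_{n\ge0}\frac{(-1)^n}{(2n+1)^2}$ is Catalan's constant. $\mathcal C_3(x)=\prod_{n\ge1,\ n\text{ odd}}\left\{\left(1-\frac{x^2}{(n/2)^2}\right)^{(n/2)^2}e^{x^2}\right\}$ for real $|x|<\tfrac12$ (the order-3 Kurokawa–Koyama multiple cosine function; the product converges to a positive number). *)

theory Defs
  imports "HOL-Analysis.Analysis"
begin

definition zeta :: "real \<Rightarrow> real" where
  "zeta s = (\<Sum>n. 1 / (real (Suc n)) powr s)"

definition catalan :: real where
  "catalan = (\<Sum>n. (-1) ^ n / (2 * real n + 1) ^ 2)"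

definition multicos3 :: "real \<Rightarrow> real" where
  "multicos3 x = (\<Prod>k. (1 - x^2 / ((2 * real k + 1) / 2)^2) powr (((2 * real k + 1) / 2)^2)
                        * exp (x^2))"

end

theory Submission
  imports Defs
begin

text \<open>Write \<open>h k\<close> for \<open>half_odd_sq k = ((2k+1)/2)^2\<close>. Then \<open>\<integral>\<^sub>0\<^sup>x t ln (1 - t^2/h k) dt = ((x^2 - h k) ln (1 - x^2/h k) - x^2)/2\<close>,
  so the logarithm of the \<open>k\<close>-th factor of \<open>multicos3 x\<close> is \<open>x^2 ln (1 - x^2/h k) - 2 \<integral>\<^sub>0\<^sup>x t ln (1 - t^2/h k) dt\<close>.
  Summing over \<open>k\<close> with the product formula \<open>cos (\<pi> x) = \<Prod>k. (1 - x^2/h k)\<close> gives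
  \<open>ln (multicos3 x) = x^2 ln (cos (\<pi> x)) - 2 \<integral>\<^sub>0\<^sup>x t ln (cos (\<pi> t)) dt\<close> for \<open>0 \<le> x < 1/2\<close>.
  At \<open>x = 1/4\<close> the integral is computed termwise from the Fourier series
  \<open>ln (2 cos (\<pi> t)) = \<Sum>k\<ge>1. (-1)^(k+1) cos (2\<pi> k t) / k\<close>, the Abel limit \<open>r \<rightarrow> 1\<close> of
  \<open>ln \<bar>1 + r e^(2\<pi> i t)\<bar>\<close>. The resulting terms depend on \<open>k mod 4\<close>; grouped accordingly they produce
  Catalan's constant and, via \<open>\<Sum>j. 1/(2j+1)^3 = 7/8 \<zeta>(3)\<close>, the value \<open>\<zeta>(3)\<close>.\<close>

lemma has_integral_real_derivative:
  fixes F f :: "real \<Rightarrow> real"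
  assumes "a \<le> b" and "\<And>x. x \<in> {a..b} \<Longrightarrow> (F has_real_derivative f x) (at x)"
  shows "(f has_integral (F b - F a)) {a..b}"
  using assms by (intro fundamental_theorem_of_calculus)
    (auto simp: has_real_derivative_iff_has_vector_derivative intro: has_vector_derivative_at_within)

lemma has_integral_suminf_Weierstrass:
  fixes f :: "nat \<Rightarrow> real \<Rightarrow> real"
  assumes int: "\<And>k. (f k has_integral I k) {a..b}"
    and cont: "\<And>k. continuous_on {a..b} (f k)"
    and bound: "\<And>k t. t \<in> {a..b} \<Longrightarrow> \<bar>f k t\<bar> \<le> M k" and "summable M"
    and sums: "\<And>t. t \<in> {a..b} \<Longrightarrow> (\<lambda>k. f k t) sums g t"
  shows "summable I" "(g has_integral (\<Sum>k. I k)) {a..b}"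
proof -
  have "uniform_limit {a..b} (\<lambda>n t. \<Sum>k<n. f k t) (\<lambda>t. \<Sum>k. f k t) sequentially"
    using bound \<open>summable M\<close> by (intro Weierstrass_m_test) auto
  then obtain S J where S: "\<And>n. ((\<lambda>t. \<Sum>k<n. f k t) has_integral S n) {a..b}"
    and J: "((\<lambda>t. \<Sum>k. f k t) has_integral J) {a..b}" and lim: "S \<longlonglongrightarrow> J"
    by (rule uniform_limit_integral) (use cont in \<open>auto intro: continuous_on_sum\<close>)
  have "S n = (\<Sum>k<n. I k)" for n
    using S[of n] has_integral_sum[of "{..<n}" f I, OF _ int] by (auto dest: has_integral_unique)
  then have "S = (\<lambda>n. \<Sum>k<n. I k)"
    by (intro ext)
  with lim have "I sums J"
    unfolding sums_def by simp
  then show "summable I" "(g has_integral (\<Sum>k. I k)) {a..b}"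
    using J sums has_integral_cong[of "{a..b}" "\<lambda>t. \<Sum>k. f k t" g] by (auto simp: sums_iff)
qed

lemma continuous_on_power_series_abs_summable:
  fixes c :: "nat \<Rightarrow> real"
  assumes "summable (\<lambda>k. \<bar>c k\<bar>)"
  shows "continuous_on {-1..1} (\<lambda>r. \<Sum>k. r^k * c k)"
proof (rule uniform_limit_theorem)
  show "uniform_limit {-1..1} (\<lambda>n r. \<Sum>k<n. r^k * c k) (\<lambda>r. \<Sum>k. r^k * c k) sequentially"
  proof (rule Weierstrass_m_test[OF _ assms])
    fix k and r :: real
    assume "r \<in> {-1..1}"
    then have "\<bar>r\<bar>^k * \<bar>c k\<bar> \<le> 1 * \<bar>c k\<bar>"
      by (intro mult_right_mono power_le_one) auto
    then show "norm (r^k * c k) \<le> \<bar>c k\<bar>"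
      by (simp add: abs_mult power_abs)
  qed
qed (auto intro!: always_eventually continuous_intros)

lemma sums_group_pairs:
  fixes f :: "nat \<Rightarrow> 'a::real_normed_vector"
  assumes "f sums s"
  shows "(\<lambda>j. f (2 * j) + f (2 * j + 1)) sums s"
  using sums_group[OF assms, of 2] by (simp add: numeral_2_eq_2 mult.commute)

lemma sums_group_quadruples:
  fixes f :: "nat \<Rightarrow> 'a::real_normed_vector"
  assumes "f sums s"
  shows "(\<lambda>j. f (4 * j) + f (4 * j + 1) + f (4 * j + 2) + f (4 * j + 3)) sums s"
  using sums_group[OF assms, of 4] by (simp add: numeral_eq_Suc mult.commute add.assoc)

lemma abs_ln_one_minus_le:
  fixes u q :: real
  assumes "0 \<le> u" "u \<le> q" "q < 1"
  shows "\<bar>ln (1 - u)\<bar> \<le> u / (1 - q)"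
proof -
  have "- ln (1 - u) = ln (1 / (1 - u))"
    using assms by (simp add: ln_div)
  also have "\<dots> \<le> 1 / (1 - u) - 1"
    using assms by (intro ln_le_minus_one) simp
  also have "\<dots> = u / (1 - u)"
    using assms by (simp add: field_simps)
  also have "\<dots> \<le> u / (1 - q)"
    using assms by (intro divide_left_mono) auto
  finally show ?thesis
    using assms by simp
qed

lemma cos_pi_pos:
  fixes t :: real
  assumes "\<bar>t\<bar> < 1/2"
  shows "0 < cos (pi * t)"
proof -
  have "\<bar>pi * t\<bar> < pi / 2"
    using assms by (simp add: abs_mult)
  then show ?thesis
    unfolding abs_less_iff by (intro cos_gt_zero_pi) linarith+
qed

section \<open>The product formula for the cosine\<close>

lemma prod_sin_factors_double:
  fixes x :: real
  shows "(\<Prod>k=1..2*n. 1 - (2*x)^2 / (real k)^2) =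
         (\<Prod>k=1..n. 1 - x^2 / (real k)^2) * (\<Prod>j<n. 1 - 4*x^2 / (2*real j + 1)^2)"
proof (induction n)
  case (Suc n)
  have "real (2*n+2) = 2 * real (Suc n)"
    by simp
  then have "(2*x)^2 / (real (2*n+2))^2 = x^2 / (real (Suc n))^2"
    by (simp only: power_mult_distrib) simp
  moreover have "(2*x)^2 / (real (2*n+1))^2 = 4*x^2 / (2*real n + 1)^2"
    by (simp add: power_mult_distrib add.commute)
  ultimately show ?case
    using Suc.IH by (simp add: prod.cl_ivl_Suc mult_ac)
qed simp

lemma prod_sin_factors_nonzero:
  fixes x :: real
  assumes "x \<notin> \<int>"
  shows "(\<Prod>k=1..n. 1 - x^2 / (real k)^2) \<noteq> 0"
proof -
  have "1 - x^2 / (real k)^2 \<noteq> 0" if "k \<ge> 1" for k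
  proof
    assume "1 - x^2 / (real k)^2 = 0"
    then have "x^2 = (real k)^2"
      using that by (simp add: field_simps)
    then have "x = real k \<or> x = - real k"
      by (simp add: power2_eq_iff)
    with assms show False
      by auto
  qed
  then show ?thesis
    by (simp add: prod_zero_iff)
qed

text \<open>The odd factors are the quotient of the sine products for \<open>2x\<close> (truncated at \<open>2n\<close>) and for \<open>x\<close>,
  and \<open>sin (2\<pi>x) / (2\<pi>x) = cos (\<pi>x) \<cdot> sin (\<pi>x) / (\<pi>x)\<close>.\<close>
lemma cos_product_formula_real:
  fixes x :: real
  assumes "x \<notin> \<int>"
  shows "(\<lambda>n. \<Prod>j<n. 1 - 4*x^2 / (2*real j + 1)^2) \<longlonglongrightarrow> cos (pi * x)"
proof -
  define P where "P y n = (\<Prod>k=1..n. 1 - y^2 / (real k)^2)" for y n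
  have "x \<noteq> 0"
    using assms by auto
  have sin_ne: "sin (pi * x) \<noteq> 0"
    using assms sin_times_pi_eq_0[of x] by (simp add: mult.commute)
  have P_ne: "P x n \<noteq> 0" for n
    unfolding P_def using assms by (rule prod_sin_factors_nonzero)
  have "(\<lambda>n. P (2*x) (2*n)) \<longlonglongrightarrow> sin (pi * (2*x)) / (pi * (2*x))"
    unfolding P_def using \<open>x \<noteq> 0\<close>
    by (intro LIMSEQ_subseq_LIMSEQ[OF sin_product_formula_real', unfolded o_def])
       (auto simp: strict_mono_def)
  moreover have "P x \<longlonglongrightarrow> sin (pi * x) / (pi * x)"
    unfolding P_def using \<open>x \<noteq> 0\<close> by (rule sin_product_formula_real')
  ultimately have "(\<lambda>n. P (2*x) (2*n) / P x n) \<longlonglongrightarrow>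
      (sin (pi * (2*x)) / (pi * (2*x))) / (sin (pi * x) / (pi * x))"
    using sin_ne \<open>x \<noteq> 0\<close> by (intro tendsto_divide) auto
  also have "(sin (pi * (2*x)) / (pi * (2*x))) / (sin (pi * x) / (pi * x)) = cos (pi * x)"
    using sin_double[of "pi * x"] sin_ne \<open>x \<noteq> 0\<close> by (simp add: field_simps)
  also have "(\<lambda>n. P (2*x) (2*n) / P x n) = (\<lambda>n. \<Prod>j<n. 1 - 4*x^2 / (2*real j + 1)^2)"
  proof
    fix n
    have "P (2*x) (2*n) = P x n * (\<Prod>j<n. 1 - 4*x^2 / (2*real j + 1)^2)"
      unfolding P_def by (rule prod_sin_factors_double)
    with P_ne[of n] show "P (2*x) (2*n) / P x n = (\<Prod>j<n. 1 - 4*x^2 / (2*real j + 1)^2)"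
      by simp
  qed
  finally show ?thesis .
qed

lemma ln_cos_sums:
  fixes x :: real
  assumes "\<bar>x\<bar> < 1/2"
  shows "(\<lambda>j. ln (1 - 4*x^2 / (2*real j + 1)^2)) sums ln (cos (pi * x))"
proof (cases "x = 0")
  case False
  have factor_pos: "1 - 4*x^2 / (2*real j + 1)^2 > 0" for j
  proof -
    have "4*x^2 < 1"
      using assms abs_square_less_1[of "2*x"] by (simp add: power_mult_distrib)
    also have "1 \<le> (2*real j + 1)^2"
      by simp
    finally show ?thesis
      by (simp add: divide_less_eq)
  qed
  have "x \<notin> \<int>"
    using assms False by (auto elim!: Ints_cases)
  with cos_pi_pos[OF assms]
  have "(\<lambda>n. ln (\<Prod>j<n. 1 - 4*x^2 / (2*real j + 1)^2)) \<longlonglongrightarrow> ln (cos (pi * x))"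
    by (intro tendsto_ln cos_product_formula_real) auto
  then show ?thesis
    unfolding sums_def using factor_pos by (simp add: ln_prod less_imp_neq[symmetric])
qed simp

section \<open>The multiple cosine as an integral\<close>

definition half_odd_sq :: "nat \<Rightarrow> real" where
  "half_odd_sq k = ((2 * real k + 1) / 2)^2"

lemma half_odd_sq_ge: "(real (Suc k))^2 / 4 \<le> half_odd_sq k"
  unfolding half_odd_sq_def by (simp add: power_divide power_mono)

lemma half_odd_sq_ge_quarter: "1/4 \<le> half_odd_sq k"
  using half_odd_sq_ge[of k] one_le_power[of "real (Suc k)" 2] by linarith

lemma one_minus_div_half_odd_sq_pos:
  assumes "t^2 < 1/4"
  shows "0 < 1 - t^2 / half_odd_sq k"
proof -
  have "t^2 / half_odd_sq k \<le> t^2 / (1/4)"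
    using half_odd_sq_ge_quarter[of k] by (intro divide_left_mono) auto
  with assms show ?thesis
    by simp
qed

lemma ln_one_minus_div_half_odd_sq_sums:
  assumes "\<bar>t\<bar> < 1/2"
  shows "(\<lambda>k. ln (1 - t^2 / half_odd_sq k)) sums ln (cos (pi * t))"
proof -
  have "t^2 / half_odd_sq k = 4 * t^2 / (2 * real k + 1)^2" for k
    by (simp add: half_odd_sq_def power_divide)
  with ln_cos_sums[OF assms] show ?thesis
    by simp
qed

lemma abs_t_ln_one_minus_div_half_odd_sq_le:
  assumes "0 \<le> t" "t \<le> x" "4 * x^2 < 1"
  shows "\<bar>t * ln (1 - t^2 / half_odd_sq k)\<bar> \<le> x * (4 * x^2 / (1 - 4 * x^2)) / (real (Suc k))^2"
proof -
  have "t^2 / half_odd_sq k \<le> x^2 / ((real (Suc k))^2 / 4)"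
    using assms half_odd_sq_ge[of k] by (intro frac_le power_mono) auto
  then have u: "t^2 / half_odd_sq k \<le> 4 * x^2 / (real (Suc k))^2"
    by (simp add: algebra_simps)
  have "4 * x^2 / (real (Suc k))^2 \<le> 4 * x^2 / 1"
    by (intro divide_left_mono) auto
  then have "\<bar>ln (1 - t^2 / half_odd_sq k)\<bar> \<le> (t^2 / half_odd_sq k) / (1 - 4 * x^2)"
    using u assms half_odd_sq_ge_quarter[of k] by (intro abs_ln_one_minus_le) auto
  also have "\<dots> \<le> (4 * x^2 / (real (Suc k))^2) / (1 - 4 * x^2)"
    using u assms by (intro divide_right_mono) auto
  finally have "\<bar>t\<bar> * \<bar>ln (1 - t^2 / half_odd_sq k)\<bar> \<le> x * ((4 * x^2 / (real (Suc k))^2) / (1 - 4 * x^2))"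
    using assms by (intro mult_mono) auto
  then show ?thesis
    by (simp add: abs_mult mult.commute)
qed

lemma has_integral_t_ln_one_minus_sq:
  fixes A x :: real
  assumes "0 \<le> x" "x^2 < A"
  shows "((\<lambda>t. t * ln (1 - t^2 / A)) has_integral ((x^2 - A) * ln (1 - x^2 / A) - x^2) / 2) {0..x}"
proof -
  have "A > 0"
    using assms(2) zero_le_power2[of x] by linarith
  have "((\<lambda>t. ((t^2 - A) * ln (1 - t^2 / A) - t^2) / 2) has_real_derivative t * ln (1 - t^2 / A)) (at t)"
    if "t \<in> {0..x}" for t
  proof -
    have "t^2 \<le> x^2"
      using that by (intro power_mono) auto
    then have "t^2 < A" "A - t^2 \<noteq> 0"
      using assms by linarith+
    then show ?thesis
      using \<open>A > 0\<close> by (auto intro!: derivative_eq_intros simp: divide_simps) (simp add: algebra_simps)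
  qed
  from has_integral_real_derivative[OF assms(1) this] show ?thesis
    by simp
qed

lemma sums_integral_t_ln_cos:
  assumes "0 \<le> x" "x < 1/2"
  shows "(\<lambda>k. ((x^2 - half_odd_sq k) * ln (1 - x^2 / half_odd_sq k) - x^2) / 2)
           sums integral {0..x} (\<lambda>t. t * ln (cos (pi * t)))"
proof -
  define f where "f k t = t * ln (1 - t^2 / half_odd_sq k)" for k t
  have "x^2 < (1/2)^2"
    using assms by (intro power_strict_mono) auto
  then have "x^2 < 1/4" "4 * x^2 < 1"
    by (simp_all add: power_divide)
  have small: "t^2 < 1/4" if "t \<in> {0..x}" for t
  proof -
    have "t^2 \<le> x^2"
      using that by (intro power_mono) auto
    with \<open>x^2 < 1/4\<close> show ?thesis
      by linarith
  qed
  have int: "(f k has_integral ((x^2 - half_odd_sq k) * ln (1 - x^2 / half_odd_sq k) - x^2) / 2) {0..x}"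
    for k
    unfolding f_def using assms(1) \<open>x^2 < 1/4\<close> half_odd_sq_ge_quarter[of k]
    by (intro has_integral_t_ln_one_minus_sq) auto
  have cont: "continuous_on {0..x} (f k)" for k
  proof -
    have "half_odd_sq k \<noteq> 0"
      using half_odd_sq_ge_quarter[of k] by auto
    moreover have "\<forall>t\<in>{0..x}. 1 - t^2 / half_odd_sq k \<noteq> 0"
      using one_minus_div_half_odd_sq_pos[OF small] by (metis less_irrefl)
    ultimately show ?thesis
      unfolding f_def by (intro continuous_intros) auto
  qed
  have bound: "\<bar>f k t\<bar> \<le> x * (4 * x^2 / (1 - 4 * x^2)) / (real (Suc k))^2" if "t \<in> {0..x}" for k t
    unfolding f_def using that \<open>4 * x^2 < 1\<close> by (intro abs_t_ln_one_minus_div_half_odd_sq_le) auto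
  have "summable (\<lambda>k. inverse (real (Suc k) ^ 2))"
    using inverse_power_summable[of 2, where 'a=real] by (subst summable_Suc_iff) simp
  then have summable: "summable (\<lambda>k. x * (4 * x^2 / (1 - 4 * x^2)) / (real (Suc k))^2)"
    using summable_mult[of _ "x * (4 * x^2 / (1 - 4 * x^2))"] by (simp add: divide_inverse)
  have "(\<lambda>k. f k t) sums (t * ln (cos (pi * t)))" if "t \<in> {0..x}" for t
    unfolding f_def using that assms by (intro sums_mult ln_one_minus_div_half_odd_sq_sums) auto
  from has_integral_suminf_Weierstrass[OF int cont bound summable this] show ?thesis
    by (auto simp: integral_unique summable_sums)
qed

lemma multicos3_eq:
  fixes x :: real
  assumes "0 \<le> x" "x < 1/2"
  shows "multicos3 x = exp (x^2 * ln (cos (pi * x)) - 2 * integral {0..x} (\<lambda>t. t * ln (cos (pi * t))))"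
proof -
  define J where "J = integral {0..x} (\<lambda>t. t * ln (cos (pi * t)))"
  have "(\<lambda>k. x^2 * ln (1 - x^2 / half_odd_sq k)
      - 2 * (((x^2 - half_odd_sq k) * ln (1 - x^2 / half_odd_sq k) - x^2) / 2))
    sums (x^2 * ln (cos (pi * x)) - 2 * J)"
    unfolding J_def using assms
    by (intro sums_diff sums_mult ln_one_minus_div_half_odd_sq_sums sums_integral_t_ln_cos) auto
  moreover have "x^2 * ln (1 - x^2 / half_odd_sq k)
      - 2 * (((x^2 - half_odd_sq k) * ln (1 - x^2 / half_odd_sq k) - x^2) / 2)
    = half_odd_sq k * ln (1 - x^2 / half_odd_sq k) + x^2" for k
    by (simp add: field_simps)
  ultimately have sums: "(\<lambda>k. half_odd_sq k * ln (1 - x^2 / half_odd_sq k) + x^2)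
      sums (x^2 * ln (cos (pi * x)) - 2 * J)"
    by simp
  have "x^2 < 1/4"
    using assms power_strict_mono[of x "1/2" 2] by (simp add: power_divide)
  have "(1 - x^2 / half_odd_sq k) powr half_odd_sq k = exp (half_odd_sq k * ln (1 - x^2 / half_odd_sq k))"
    for k
  proof -
    have "1 - x^2 / half_odd_sq k \<noteq> 0"
      using one_minus_div_half_odd_sq_pos[OF \<open>x^2 < 1/4\<close>, of k] by (metis less_irrefl)
    then show ?thesis
      by (simp only: powr_def if_False)
  qed
  then have "multicos3 x = (\<Prod>k. exp (half_odd_sq k * ln (1 - x^2 / half_odd_sq k) + x^2))"
    unfolding multicos3_def half_odd_sq_def[symmetric] exp_add by simp
  also have "\<dots> = exp (x^2 * ln (cos (pi * x)) - 2 * J)"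
    using prodinf_exp[OF sums_summable[OF sums]] sums_unique[OF sums] by simp
  finally show ?thesis
    unfolding J_def .
qed

section \<open>The Fourier series of \<open>ln (2 cos (\<pi> t))\<close>\<close>

lemma ln_one_plus_cis_sums:
  fixes r \<theta> :: real
  assumes "\<bar>r\<bar> < 1"
  shows "(\<lambda>k. - ((-r)^k) / real k * cos (real k * \<theta>)) sums (ln (1 + 2 * r * cos \<theta> + r^2) / 2)"
proof -
  define z where "z = complex_of_real r * cis \<theta>"
  have "norm z < 1"
    using assms by (simp add: z_def norm_mult)
  then have series: "(\<lambda>k. Re (- ((-z)^k) / of_nat k)) sums Re (ln (1 + z))"
    by (intro sums_Re Ln_series')
  have coeff: "Re (- ((-z)^k) / of_nat k) = - ((-r)^k) / real k * cos (real k * \<theta>)" for k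
  proof -
    have "-z = complex_of_real (-r) * cis \<theta>"
      by (simp add: z_def)
    then have "(-z)^k = complex_of_real ((-r)^k) * cis (real k * \<theta>)"
      by (simp only: power_mult_distrib Complex.DeMoivre of_real_power)
    then show ?thesis
      by simp
  qed
  have re_ln: "Re (ln (1 + z)) = ln (1 + 2 * r * cos \<theta> + r^2) / 2"
  proof -
    have "1 + z \<noteq> 0"
      using \<open>norm z < 1\<close> by (metis add.inverse_unique norm_minus_cancel norm_one order.irrefl)
    then have "Re (ln (1 + z)) = ln ((cmod (1 + z))^2) / 2"
      by (simp add: ln_realpow)
    also have "(cmod (1 + z))^2 = (1 + r * cos \<theta>)^2 + (r * sin \<theta>)^2"
      unfolding cmod_power2 z_def by simp
    also have "\<dots> = 1 + 2 * r * cos \<theta> + r^2 * ((sin \<theta>)^2 + (cos \<theta>)^2)"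
      by (simp only: power2_eq_square algebra_simps)
    also have "\<dots> = 1 + 2 * r * cos \<theta> + r^2"
      by simp
    finally show ?thesis .
  qed
  from series show ?thesis
    unfolding coeff re_ln .
qed

lemma has_integral_t_cos:
  fixes \<omega> x :: real
  assumes "\<omega> \<noteq> 0" "0 \<le> x"
  shows "((\<lambda>t. t * cos (\<omega> * t)) has_integral (x * sin (\<omega> * x) / \<omega> + (cos (\<omega> * x) - 1) / \<omega>^2)) {0..x}"
proof -
  have "((\<lambda>t. t * sin (\<omega> * t) / \<omega> + cos (\<omega> * t) / \<omega>^2) has_real_derivative t * cos (\<omega> * t)) (at t)" for t
    using assms by (auto intro!: derivative_eq_intros simp: field_simps power2_eq_square)
  from has_integral_real_derivative[OF assms(2) this] show ?thesis
    by (simp add: diff_divide_distrib add_diff_eq)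
qed

text \<open>\<open>log_cos_coeff k = \<integral>\<^sub>0\<^sup>1\<^sup>/\<^sup>4 t (-1)^(k+1) cos (2\<pi> k t) / k dt\<close>, the \<open>k\<close>-th term of
  \<open>\<integral>\<^sub>0\<^sup>1\<^sup>/\<^sup>4 t ln (2 cos (\<pi> t)) dt\<close>; division by zero makes \<open>log_cos_coeff 0 = 0\<close>, matching the
  absent constant term.\<close>
definition log_cos_coeff :: "nat \<Rightarrow> real" where
  "log_cos_coeff k = - ((-1)^k) *
     (sin (real k * pi / 2) / (8 * pi * (real k)^2) + (cos (real k * pi / 2) - 1) / (4 * pi^2 * (real k)^3))"

lemma has_integral_log_cos_term:
  fixes r :: real
  shows "((\<lambda>t. t * (- ((-r)^k) / real k * cos (real k * (2 * pi * t)))) has_integral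
           r^k * log_cos_coeff k) {0..1/4}"
proof (cases "k = 0")
  case False
  have "((\<lambda>t. (- ((-r)^k) / real k) * (t * cos ((2 * pi * real k) * t))) has_integral
      (- ((-r)^k) / real k) * (1/4 * sin ((2 * pi * real k) * (1/4)) / (2 * pi * real k)
         + (cos ((2 * pi * real k) * (1/4)) - 1) / (2 * pi * real k)^2)) {0..1/4}"
    using False by (intro has_integral_mult_right has_integral_t_cos) auto
  also have "(2 * pi * real k) * (1/4) = real k * pi / 2"
    by simp
  also have "(- ((-r)^k) / real k) * (1/4 * sin (real k * pi / 2) / (2 * pi * real k)
      + (cos (real k * pi / 2) - 1) / (2 * pi * real k)^2) = r^k * log_cos_coeff k"
    using False by (simp add: log_cos_coeff_def power_minus[of r] field_simps power2_eq_square power3_eq_cube)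
  also have "(\<lambda>t. (- ((-r)^k) / real k) * (t * cos ((2 * pi * real k) * t)))
      = (\<lambda>t. t * (- ((-r)^k) / real k * cos (real k * (2 * pi * t))))"
    by (simp add: mult_ac)
  finally show ?thesis .
qed (simp add: log_cos_coeff_def)

lemma log_cos_coeff_bound: "\<bar>log_cos_coeff k\<bar> \<le> 2 / (real k)^2"
proof (cases "k = 0")
  case False
  define x where "x = real k"
  have "1 \<le> x"
    using False by (simp add: x_def)
  have "1 \<le> pi"
    using pi_gt3 by simp
  have sin_term: "\<bar>sin (x * pi / 2) / (8 * pi * x^2)\<bar> \<le> 1 / x^2"
  proof -
    have "1 * x^2 \<le> (8 * pi) * x^2"
      using \<open>1 \<le> pi\<close> by (intro mult_right_mono) auto
    then show ?thesis
      using \<open>1 \<le> x\<close> by (auto simp: abs_divide abs_mult intro!: frac_le)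
  qed
  have cos_term: "\<bar>(cos (x * pi / 2) - 1) / (4 * pi^2 * x^3)\<bar> \<le> 1 / x^2"
  proof -
    have "\<bar>cos (x * pi / 2) - 1\<bar> \<le> 2"
      using abs_cos_le_one[of "x * pi / 2"] by linarith
    moreover have "2 * x^2 \<le> 4 * pi^2 * x^3"
    proof (rule mult_mono)
      show "2 \<le> 4 * pi^2"
        using one_le_power[OF \<open>1 \<le> pi\<close>, of 2] by linarith
      show "x^2 \<le> x^3"
        using \<open>1 \<le> x\<close> by (intro power_increasing) auto
    qed auto
    ultimately have "\<bar>cos (x * pi / 2) - 1\<bar> / (4 * pi^2 * x^3) \<le> 2 / (2 * x^2)"
      using \<open>1 \<le> x\<close> by (intro frac_le) auto
    then show ?thesis
      using \<open>1 \<le> x\<close> by (simp add: abs_divide abs_mult)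
  qed
  have "\<bar>log_cos_coeff k\<bar> = \<bar>sin (x * pi / 2) / (8 * pi * x^2) + (cos (x * pi / 2) - 1) / (4 * pi^2 * x^3)\<bar>"
    by (simp add: log_cos_coeff_def x_def abs_mult)
  also have "\<dots> \<le> 1 / x^2 + 1 / x^2"
    using sin_term cos_term by (intro abs_triangle_ineq[THEN order_trans]) auto
  finally show ?thesis
    by (simp add: x_def)
qed (simp add: log_cos_coeff_def)

lemma summable_abs_log_cos_coeff: "summable (\<lambda>k. \<bar>log_cos_coeff k\<bar>)"
proof (rule summable_comparison_test')
  show "summable (\<lambda>k. 2 / (real k)^2)"
    using summable_mult[OF inverse_power_summable[of 2, where 'a=real], of 2] by (simp add: divide_inverse)
  show "norm \<bar>log_cos_coeff k\<bar> \<le> 2 / (real k)^2" for k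
    using log_cos_coeff_bound by simp
qed

lemma cos_two_pi_nonneg:
  assumes "t \<in> {0..1/4}"
  shows "0 \<le> cos (2 * pi * t)"
proof -
  have "0 \<le> 2 * pi * t" "2 * pi * t \<le> 2 * pi * (1/4)"
    using assms by auto
  then show ?thesis
    using pi_gt_zero by (intro cos_ge_zero) linarith+
qed

lemma has_integral_abel_log_cos:
  fixes r :: real
  assumes "0 \<le> r" "r < 1"
  shows "((\<lambda>t. t * (ln (1 + 2 * r * cos (2 * pi * t) + r^2) / 2)) has_integral
           (\<Sum>k. r^k * log_cos_coeff k)) {0..1/4}"
proof -
  define f where "f k t = t * (- ((-r)^k) / real k * cos (real k * (2 * pi * t)))" for k t
  have bound: "\<bar>f k t\<bar> \<le> r^k" if "t \<in> {0..1/4}" for k t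
  proof -
    have "\<bar>f k t\<bar> = \<bar>t\<bar> * (r^k * (\<bar>cos (real k * (2 * pi * t))\<bar> / real k))"
      using assms by (simp add: f_def abs_mult power_abs)
    also have "\<dots> \<le> 1 * (r^k * 1)"
      using that assms
      by (intro mult_mono mult_left_mono) (auto simp: divide_le_eq intro: order_trans[OF abs_cos_le_one])
    finally show ?thesis
      by simp
  qed
  have sums: "(\<lambda>k. f k t) sums (t * (ln (1 + 2 * r * cos (2 * pi * t) + r^2) / 2))" for t
    unfolding f_def using assms by (intro sums_mult ln_one_plus_cis_sums) auto
  have int: "(f k has_integral r^k * log_cos_coeff k) {0..1/4}" for k
    unfolding f_def by (rule has_integral_log_cos_term)
  have cont: "continuous_on {0..1/4} (f k)" for k
    unfolding f_def by (intro continuous_intros)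
  have "summable (\<lambda>k. r^k)"
    using assms by (intro summable_geometric) simp
  from has_integral_suminf_Weierstrass(2)[OF int cont bound this sums] show ?thesis .
qed

lemma ln_abel_factor_diff_bounds:
  fixes r c :: real
  assumes "0 \<le> r" "r \<le> 1" "0 \<le> c" "c \<le> 1"
  shows "0 \<le> ln (2 + 2 * c) - ln (1 + 2 * r * c + r^2)"
    and "ln (2 + 2 * c) - ln (1 + 2 * r * c + r^2) \<le> 4 * (1 - r)"
proof -
  define a b where "a = 1 + 2 * r * c + r^2" and "b = 2 + 2 * c"
  have "1 \<le> a"
    using assms by (simp add: a_def)
  moreover have "a \<le> b"
    using assms mult_left_le_one_le[of c r] power_le_one[of r 2] by (simp add: a_def b_def)
  ultimately show "0 \<le> ln b - ln a"
    by simp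
  have "ln b - ln a = ln (b / a)"
    using \<open>1 \<le> a\<close> \<open>a \<le> b\<close> by (simp add: ln_div)
  also have "\<dots> \<le> b / a - 1"
    using \<open>1 \<le> a\<close> \<open>a \<le> b\<close> by (intro ln_le_minus_one) simp
  also have "\<dots> = (b - a) / a"
    using \<open>1 \<le> a\<close> by (simp add: field_simps)
  also have "\<dots> \<le> (b - a) / 1"
    using \<open>1 \<le> a\<close> \<open>a \<le> b\<close> by (intro divide_left_mono) auto
  also have "b - a = (1 - r) * (1 + r + 2 * c)"
    by (simp add: a_def b_def power2_eq_square algebra_simps)
  also have "\<dots> \<le> (1 - r) * 4"
    using assms by (intro mult_left_mono) auto
  finally show "ln b - ln a \<le> 4 * (1 - r)"
    by (simp add: a_def b_def)
qed

lemma abs_abel_log_cos_integrand_diff_le: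
  assumes "0 \<le> r" "r \<le> 1" "t \<in> {0..1/4}"
  shows "\<bar>t * (ln (1 + 2 * r * cos (2 * pi * t) + r^2) / 2) - t * ln (2 * cos (pi * t))\<bar> \<le> 1 - r"
proof -
  let ?L1 = "ln (2 + 2 * cos (2 * pi * t))" and ?L0 = "ln (1 + 2 * r * cos (2 * pi * t) + r^2)"
  have "cos (pi * t) > 0"
    using assms by (intro cos_pi_pos) auto
  moreover have "2 + 2 * cos (2 * pi * t) = (2 * cos (pi * t))^2"
    using cos_double_cos[of "pi * t"] by (simp add: power2_eq_square mult_ac)
  moreover have "ln ((2 * cos (pi * t))^2) = 2 * ln (2 * cos (pi * t))"
    using \<open>cos (pi * t) > 0\<close> by (subst ln_realpow) auto
  ultimately have "ln (2 * cos (pi * t)) = ?L1 / 2"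
    by simp
  then have "t * (?L0 / 2) - t * ln (2 * cos (pi * t)) = - (t * ((?L1 - ?L0) / 2))"
    by (simp add: field_simps)
  moreover have "0 \<le> ?L1 - ?L0" "?L1 - ?L0 \<le> 4 * (1 - r)"
    using ln_abel_factor_diff_bounds[of r "cos (2 * pi * t)"] assms cos_two_pi_nonneg[OF assms(3)] by auto
  ultimately have "\<bar>t * (?L0 / 2) - t * ln (2 * cos (pi * t))\<bar> = \<bar>t\<bar> * ((?L1 - ?L0) / 2)"
    by (simp add: abs_mult)
  also have "\<dots> \<le> (1/4) * ((4 * (1 - r)) / 2)"
    using \<open>?L1 - ?L0 \<le> 4 * (1 - r)\<close> \<open>0 \<le> ?L1 - ?L0\<close> assms by (intro mult_mono divide_right_mono) auto
  finally show ?thesis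
    using assms by simp
qed

lemma uniform_limit_abel_log_cos:
  assumes "\<And>n. 0 \<le> r n" "\<And>n. r n \<le> 1" "r \<longlonglongrightarrow> 1"
  shows "uniform_limit {0..1/4} (\<lambda>n t. t * (ln (1 + 2 * r n * cos (2 * pi * t) + (r n)^2) / 2))
           (\<lambda>t. t * ln (2 * cos (pi * t))) sequentially"
proof (rule uniform_limitI)
  fix e :: real
  assume "e > 0"
  have "(\<lambda>n. 1 - r n) \<longlonglongrightarrow> 0"
    using assms(3) by (intro tendsto_eq_intros) auto
  with \<open>e > 0\<close> have "\<forall>\<^sub>F n in sequentially. 1 - r n < e"
    by (auto dest: order_tendstoD(2))
  then show "\<forall>\<^sub>F n in sequentially. \<forall>t\<in>{0..1/4}.
      dist (t * (ln (1 + 2 * r n * cos (2 * pi * t) + (r n)^2) / 2)) (t * ln (2 * cos (pi * t))) < e"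
  proof eventually_elim
    case (elim n)
    show ?case
      using abs_abel_log_cos_integrand_diff_le[OF assms(1,2)] elim unfolding dist_real_def
      by (meson order.strict_trans1)
  qed
qed

text \<open>The Fourier series of \<open>ln (2 cos (\<pi> t))\<close> converges only conditionally, so the termwise integration
  is done at \<open>r = n/(n+1) < 1\<close>, and \<open>r \<rightarrow> 1\<close> is taken in the absolutely summable coefficients.\<close>
lemma has_integral_t_ln_two_cos:
  "((\<lambda>t. t * ln (2 * cos (pi * t))) has_integral (\<Sum>k. log_cos_coeff k)) {0..1/4}"
proof -
  define r where "r n = real n / real (Suc n)" for n
  define f where "f n t = t * (ln (1 + 2 * r n * cos (2 * pi * t) + (r n)^2) / 2)" for n t
  have r: "0 \<le> r n" "r n < 1" for n
    by (auto simp: r_def)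
  have "r \<longlonglongrightarrow> 1"
    unfolding r_def by (rule LIMSEQ_n_over_Suc_n)
  have "uniform_limit {0..1/4} f (\<lambda>t. t * ln (2 * cos (pi * t))) sequentially"
    unfolding f_def using r \<open>r \<longlonglongrightarrow> 1\<close> by (intro uniform_limit_abel_log_cos) (auto simp: less_imp_le)
  moreover have "continuous_on {0..1/4} (f n)" for n
  proof -
    have "\<forall>t\<in>{0..1/4}. 1 + 2 * r n * cos (2 * pi * t) + (r n)^2 \<noteq> 0"
      using r[of n] cos_two_pi_nonneg by (auto simp: add_pos_nonneg less_imp_neq[symmetric])
    then show ?thesis
      unfolding f_def by (intro continuous_intros) auto
  qed
  ultimately obtain I J where I: "\<And>n. (f n has_integral I n) {0..1/4}"
    and J: "((\<lambda>t. t * ln (2 * cos (pi * t))) has_integral J) {0..1/4}" and "I \<longlonglongrightarrow> J"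
    by (rule uniform_limit_integral) auto
  have "I = (\<lambda>n. \<Sum>k. r n ^ k * log_cos_coeff k)"
  proof
    show "I n = (\<Sum>k. r n ^ k * log_cos_coeff k)" for n
      using I[of n] has_integral_abel_log_cos[OF r] unfolding f_def by (rule has_integral_unique)
  qed
  with \<open>I \<longlonglongrightarrow> J\<close> have "(\<lambda>n. \<Sum>k. r n ^ k * log_cos_coeff k) \<longlonglongrightarrow> J"
    by simp
  moreover have "(\<lambda>n. \<Sum>k. r n ^ k * log_cos_coeff k) \<longlonglongrightarrow> (\<Sum>k. 1 ^ k * log_cos_coeff k)"
  proof (rule continuous_on_tendsto_compose[OF continuous_on_power_series_abs_summable])
    have "r n \<in> {-1..1}" for n
      using r[of n] by simp
    then show "\<forall>\<^sub>F n in sequentially. r n \<in> {-1..1}"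
      by (intro always_eventually allI)
  qed (use \<open>r \<longlonglongrightarrow> 1\<close> summable_abs_log_cos_coeff in auto)
  ultimately have "J = (\<Sum>k. log_cos_coeff k)"
    by (simp add: LIMSEQ_unique)
  with J show ?thesis
    by simp
qed

section \<open>Evaluation through \<open>\<zeta>(3)\<close> and Catalan's constant\<close>

lemma zeta_3_sums: "(\<lambda>n. 1 / (real (Suc n))^3) sums zeta 3"
proof -
  have "summable (\<lambda>n. 1 / (real (Suc n))^3)"
    using inverse_power_summable[of 3, where 'a=real]
    by (subst summable_Suc_iff) (simp add: inverse_eq_divide)
  then show ?thesis
    unfolding zeta_def by (simp add: summable_sums)
qed

lemma odd_cubes_sums: "(\<lambda>j. 1 / (2 * real j + 1)^3) sums (7/8 * zeta 3)"
proof -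
  have "1 / (real (Suc (2 * j + 1)))^3 = 1/8 * (1 / (real (Suc j))^3)" for j
  proof -
    have "real (Suc (2 * j + 1)) = 2 * real (Suc j)"
      by simp
    then show ?thesis
      by (simp only: power_mult_distrib) simp
  qed
  then have "(\<lambda>j. 1 / (2 * real j + 1)^3 + 1/8 * (1 / (real (Suc j))^3)) sums zeta 3"
    using sums_group_pairs[OF zeta_3_sums] by (simp add: add_ac)
  from sums_diff[OF this sums_mult[OF zeta_3_sums, of "1/8"]] show ?thesis
    by simp
qed

lemma catalan_sums: "(\<lambda>n. (-1)^n / (2 * real n + 1)^2) sums catalan"
proof -
  have "summable (\<lambda>n. 1 / (real (Suc n))^2)"
    using inverse_power_summable[of 2, where 'a=real]
    by (subst summable_Suc_iff) (simp add: inverse_eq_divide)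
  moreover have "norm ((-1)^n / (2 * real n + 1)^2) \<le> 1 / (real (Suc n))^2" for n
    by (simp add: abs_divide power_abs frac_le power_mono)
  ultimately have "summable (\<lambda>n. (-1)^n / (2 * real n + 1)^2)"
    by (rule summable_comparison_test'[OF _ ])
  then show ?thesis
    unfolding catalan_def by (rule summable_sums)
qed

lemma sin_cos_quarter_turns:
  "sin (real (4 * j + i) * pi / 2) = sin (real i * pi / 2)"
  "cos (real (4 * j + i) * pi / 2) = cos (real i * pi / 2)"
proof -
  have e: "real (4 * j + i) * pi / 2 = real i * pi / 2 + 2 * real j * pi"
    by (simp add: field_simps)
  show "sin (real (4 * j + i) * pi / 2) = sin (real i * pi / 2)"
    unfolding e by (simp add: sin_add)
  show "cos (real (4 * j + i) * pi / 2) = cos (real i * pi / 2)"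
    unfolding e by (simp add: cos_add)
qed

lemma log_cos_coeff_mod_4:
  "log_cos_coeff (4 * j) = 0"
  "log_cos_coeff (4 * j + 1) = 1 / (8 * pi * (4 * real j + 1)^2) - 1 / (4 * pi^2 * (4 * real j + 1)^3)"
  "log_cos_coeff (4 * j + 2) = 1 / (16 * pi^2 * (2 * real j + 1)^3)"
  "log_cos_coeff (4 * j + 3) = - 1 / (8 * pi * (4 * real j + 3)^2) - 1 / (4 * pi^2 * (4 * real j + 3)^3)"
proof -
  have "sin (3 * pi / 2) = -1" "cos (3 * pi / 2) = 0"
    using sin_add[of pi "pi/2"] cos_add[of pi "pi/2"] by (simp_all add: add_divide_distrib)
  then have trig: "sin (real (4 * j) * pi / 2) = 0" "cos (real (4 * j) * pi / 2) = 1"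
    "sin (real (4 * j + 1) * pi / 2) = 1" "cos (real (4 * j + 1) * pi / 2) = 0"
    "sin (real (4 * j + 2) * pi / 2) = 0" "cos (real (4 * j + 2) * pi / 2) = -1"
    "sin (real (4 * j + 3) * pi / 2) = -1" "cos (real (4 * j + 3) * pi / 2) = 0"
    using sin_cos_quarter_turns[of j 0] sin_cos_quarter_turns[of j 1]
      sin_cos_quarter_turns[of j 2] sin_cos_quarter_turns[of j 3] by simp_all
  have cube: "(2 + 4 * real j)^3 = 8 * (1 + 2 * real j)^3"
    by (simp add: power3_eq_cube algebra_simps)
  show "log_cos_coeff (4 * j) = 0"
    "log_cos_coeff (4 * j + 1) = 1 / (8 * pi * (4 * real j + 1)^2) - 1 / (4 * pi^2 * (4 * real j + 1)^3)"
    "log_cos_coeff (4 * j + 2) = 1 / (16 * pi^2 * (2 * real j + 1)^3)"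
    "log_cos_coeff (4 * j + 3) = - 1 / (8 * pi * (4 * real j + 3)^2) - 1 / (4 * pi^2 * (4 * real j + 3)^3)"
    unfolding log_cos_coeff_def trig by (simp_all add: cube power_add add.commute)
qed

lemma log_cos_coeff_sums: "log_cos_coeff sums (catalan / (8 * pi) - 21 * zeta 3 / (128 * pi^2))"
proof -
  have catalan: "(\<lambda>j. 1 / (4 * real j + 1)^2 - 1 / (4 * real j + 3)^2) sums catalan"
    using sums_group_pairs[OF catalan_sums] by (simp add: algebra_simps)
  have cubes: "(\<lambda>j. 1 / (4 * real j + 1)^3 + 1 / (4 * real j + 3)^3) sums (7/8 * zeta 3)"
    using sums_group_pairs[OF odd_cubes_sums] by (simp add: algebra_simps)
  have "(\<lambda>j. 1 / (8 * pi) * (1 / (4 * real j + 1)^2 - 1 / (4 * real j + 3)^2)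
      - 1 / (4 * pi^2) * (1 / (4 * real j + 1)^3 + 1 / (4 * real j + 3)^3)
      + 1 / (16 * pi^2) * (1 / (2 * real j + 1)^3))
    sums (1 / (8 * pi) * catalan - 1 / (4 * pi^2) * (7/8 * zeta 3) + 1 / (16 * pi^2) * (7/8 * zeta 3))"
    by (intro sums_add sums_diff sums_mult catalan cubes odd_cubes_sums)
  moreover have "summable log_cos_coeff"
    using summable_abs_log_cos_coeff by (rule summable_rabs_cancel)
  from sums_group_quadruples[OF summable_sums[OF this]]
  have "(\<lambda>j. 1 / (8 * pi) * (1 / (4 * real j + 1)^2 - 1 / (4 * real j + 3)^2)
      - 1 / (4 * pi^2) * (1 / (4 * real j + 1)^3 + 1 / (4 * real j + 3)^3)
      + 1 / (16 * pi^2) * (1 / (2 * real j + 1)^3)) sums (\<Sum>k. log_cos_coeff k)"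
    unfolding log_cos_coeff_mod_4 by (simp add: algebra_simps)
  ultimately have "(\<Sum>k. log_cos_coeff k) = catalan / (8 * pi) - 21 * zeta 3 / (128 * pi^2)"
    by (simp add: sums_unique2 field_simps)
  with \<open>summable log_cos_coeff\<close> show ?thesis
    by (metis summable_sums)
qed

lemma integral_t_ln_cos_quarter:
  "integral {0..1/4} (\<lambda>t. t * ln (cos (pi * t))) = catalan / (8 * pi) - 21 * zeta 3 / (128 * pi^2) - ln 2 / 32"
proof -
  have "((\<lambda>t::real. t * ln 2) has_integral ((1/4)^2 / 2 * ln 2 - 0^2 / 2 * ln 2)) {0..1/4}"
    by (rule has_integral_real_derivative) (auto intro!: derivative_eq_intros)
  then have "((\<lambda>t::real. t * ln 2) has_integral ln 2 / 32) {0..1/4}"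
    by (simp add: power2_eq_square)
  from has_integral_diff[OF has_integral_t_ln_two_cos this]
  have diff: "((\<lambda>t. t * ln (2 * cos (pi * t)) - t * ln 2) has_integral
      (catalan / (8 * pi) - 21 * zeta 3 / (128 * pi^2) - ln 2 / 32)) {0..1/4}"
    unfolding sums_unique[OF log_cos_coeff_sums, symmetric] .
  have eq: "t * ln (2 * cos (pi * t)) - t * ln 2 = t * ln (cos (pi * t))" if "t \<in> {0..1/4}" for t
  proof -
    have "0 < cos (pi * t)"
      using that by (intro cos_pi_pos) auto
    then show ?thesis
      by (simp add: ln_mult algebra_simps)
  qed
  have "((\<lambda>t. t * ln (cos (pi * t))) has_integral
      (catalan / (8 * pi) - 21 * zeta 3 / (128 * pi^2) - ln 2 / 32)) {0..1/4}"
    by (rule has_integral_cong[THEN iffD1, OF _ diff]) (rule eq)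
  then show ?thesis
    by (rule integral_unique)
qed

theorem corollary2p7:
  shows "zeta 3 = 4 * pi^2 / 21 * ln (exp (4 * catalan / pi) * multicos3 (1/4) ^ 16 / sqrt 2)"
proof -
  define L where "L = (1/4)^2 * (- ln 2 / 2) - 2 * (catalan / (8 * pi) - 21 * zeta 3 / (128 * pi^2) - ln 2 / 32)"
  have "ln (cos (pi / 4)) = - ln 2 / 2"
    by (simp add: cos_45 ln_div ln_sqrt)
  then have mc: "multicos3 (1/4) = exp L"
    using multicos3_eq[of "1/4"] unfolding integral_t_ln_cos_quarter L_def by simp
  have "ln (exp (4 * catalan / pi) * multicos3 (1/4) ^ 16 / sqrt 2) = 4 * catalan / pi + 16 * L - ln 2 / 2"
    unfolding mc by (simp add: ln_div ln_mult ln_sqrt flip: exp_of_nat_mult)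
  also have "\<dots> = 21 * zeta 3 / (4 * pi^2)"
    unfolding L_def by (simp add: field_simps)
  finally show ?thesis
    by (simp add: field_simps)
qed

end
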